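(* Let $L$ be a linear order in which every cut $(I,J)$ with $I$ and $J$ both nonempty has a type. If $(C_k)_{k\in\omega}$ and $(D_l)_{l\in\omega}$ are two ladders in $L$, then there exist $k_0,l_0\in\omega$ such that $C_{k_0+n}=D_{l_0+n}$ for all $n\in\omega$. Consequently, if $(C_k)$ has spectrum $(n_k)_{k\in\omega}$ and $(D_l)$ has spectrum $(m_l)_{l\in\omega}$, then these spectra are tail-equivalent: there exist $k_0,l_0$ with $n_{k_0+n}=m_{l_0+n}$ for all $n\in\omega$.
   Context: A cut in a linear order $L$ is a pair $(I,J)$ where $I$ is an initial segment of $L$ and $J=L\setminus I$. For cuts $C_1=(I_1,J_1)$ and $C_2=(I_2,J_2)$, write $C_1<C_2$ if $I_1$ is a strict initial segment of $I_2$. For $n\in\omega$, a cut $C=(I,J)$ has type $n$, written $tp(C)=n$, if $I$ has a final segment isomorphic to the ordinal $\omega^n$ (so type $0$ means $I$ has a greatest element); a cut has at most one type. A sequence of cuts $\cdots<C_2<C_1<C_0$ in $L$, each with both sides nonempty, is a ladder if: (1) it is coinitial in $L$, i.e. for every $x\in L$ there is $k$ with $x$ not in the left side of $C_k$ (every point of $L$ is eventually to the right of the cuts); (2) $tp(C_{k+1})\ge tp(C_k)$ for all $k$; (3) for all $k$, every cut $D$ with $C_{k+1}<D<C_k$ satisfies $tp(D)<tp(C_k)$. A ladder $(C_k)$ has spectrum $(n_k)_{k\in\omega}$ if $tp(C_k)=n_k$ for all $k$. *)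

theory Defs
  imports Main
begin

text \<open>The linear order L is modelled as a type of class linorder (L = UNIV).
A cut (I, J) is represented by its left side I; J is its complement -I.\<close>

definition is_cut :: "'a::linorder set \<Rightarrow> bool" where
  "is_cut I \<longleftrightarrow> (\<forall>x y. y \<in> I \<longrightarrow> x \<le> y \<longrightarrow> x \<in> I)"

definition proper_cut :: "'a::linorder set \<Rightarrow> bool" where
  "proper_cut I \<longleftrightarrow> is_cut I \<and> I \<noteq> {} \<and> - I \<noteq> {}"

text \<open>The ordinal omega^n, realised as length-n lists of naturals with the
lexicographic order (first coordinate most significant).\<close>

fun lex_less :: "nat list \<Rightarrow> nat list \<Rightarrow> bool" where
  "lex_less [] [] = False"
| "lex_less (x # xs) (y # ys) = (x < y \<or> (x = y \<and> lex_less xs ys))"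
| "lex_less _ _ = False"

definition omega_pow :: "nat \<Rightarrow> nat list set" where
  "omega_pow n = {xs. length xs = n}"

definition final_segment :: "'a::linorder set \<Rightarrow> 'a set \<Rightarrow> bool" where
  "final_segment F I \<longleftrightarrow> F \<subseteq> I \<and> (\<forall>x y. x \<in> F \<longrightarrow> y \<in> I \<longrightarrow> x \<le> y \<longrightarrow> y \<in> F)"

definition iso_omega_pow :: "'a::linorder set \<Rightarrow> nat \<Rightarrow> bool" where
  "iso_omega_pow F n \<longleftrightarrow> (\<exists>f. bij_betw f F (omega_pow n) \<and>
      (\<forall>x\<in>F. \<forall>y\<in>F. x < y \<longleftrightarrow> lex_less (f x) (f y)))"

definition cut_type :: "'a::linorder set \<Rightarrow> nat \<Rightarrow> bool" where
  "cut_type I n \<longleftrightarrow> is_cut I \<and> (\<exists>F. final_segment F I \<and> iso_omega_pow F n)"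

definition ladder :: "(nat \<Rightarrow> 'a::linorder set) \<Rightarrow> bool" where
  "ladder C \<longleftrightarrow>
     (\<forall>k. proper_cut (C k)) \<and>
     (\<forall>k. C (Suc k) \<subset> C k) \<and>
     (\<forall>x. \<exists>k. x \<notin> C k) \<and>
     (\<exists>ns. (\<forall>k. cut_type (C k) (ns k)) \<and>
        (\<forall>k. ns (Suc k) \<ge> ns k) \<and>
        (\<forall>k D. is_cut D \<longrightarrow> C (Suc k) \<subset> D \<longrightarrow> D \<subset> C k \<longrightarrow>
              (\<exists>m. cut_type D m \<and> m < ns k)))"

definition has_spectrum :: "(nat \<Rightarrow> 'a::linorder set) \<Rightarrow> (nat \<Rightarrow> nat) \<Rightarrow> bool" where
  "has_spectrum C ns \<longleftrightarrow> ladder C \<and> (\<forall>k. cut_type (C k) (ns k))"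

end

theory Submission
  imports Defs
begin

text \<open>A cut has at most one type: \<open>\<omega>\<^sup>a\<close> order-embeds into \<open>\<omega>\<^sup>b\<close> only if \<open>a \<le> b\<close>
  (otherwise padding with zeros maps \<open>\<omega>\<^sup>a\<close> monotonically below \<open>(1,0,\<dots>,0)\<close>, while a monotone
  self-map of a well-order moves no point downwards), and every nonempty final segment of a copy
  of \<open>\<omega>\<^sup>a\<close> contains a copy of \<open>\<omega>\<^sup>a\<close>.

  If a rung \<open>D (Suc l)\<close> lies strictly between \<open>C (Suc j)\<close> and \<open>C j\<close> of the other ladder, so does \<open>D l\<close>:
  types do not decrease along \<open>D\<close>, whereas cuts inside the gap have type below that of \<open>C j\<close>.
  Hence no rung of \<open>D\<close> below a rung \<open>C J \<subset> D 0\<close> can lie strictly inside a gap of \<open>C\<close>, so all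
  deep rungs of \<open>D\<close> are rungs of \<open>C\<close> and vice versa; two strictly decreasing chains that
  eventually lie in each other's range agree after a shift.\<close>

lemma lex_less_imp_lex:
  "length xs = length ys \<Longrightarrow> lex_less xs ys \<Longrightarrow> (xs, ys) \<in> lex less_than"
  by (induction xs ys rule: lex_less.induct) auto

lemma lex_less_replicate_prefix:
  "lex_less (replicate k 0 @ xs) (replicate k 0 @ ys) = lex_less xs ys"
  by (induction k) auto

lemma wf_lex_less_omega_pow:
  "wf {(xs, ys). xs \<in> omega_pow n \<and> ys \<in> omega_pow n \<and> lex_less xs ys}"
  by (rule wf_subset[OF wf_lex[OF wf_less_than]]) (auto simp: omega_pow_def lex_less_imp_lex)

lemma monotone_on_omega_pow_not_lex_less:
  assumes into: "g ` omega_pow n \<subseteq> omega_pow n"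
    and mono: "monotone_on (omega_pow n) lex_less lex_less g"
    and p: "p \<in> omega_pow n"
  shows "\<not> lex_less (g p) p"
  using wf_lex_less_omega_pow[of n] p
proof (induction p rule: wf_induct_rule)
  case (less p)
  show ?case
  proof
    assume down: "lex_less (g p) p"
    have gp: "g p \<in> omega_pow n" using into less.prems by blast
    have "\<not> lex_less (g (g p)) (g p)" using less.IH gp down less.prems by blast
    moreover have "lex_less (g (g p)) (g p)" using monotone_onD[OF mono gp less.prems down] .
    ultimately show False by contradiction
  qed
qed

lemma omega_pow_embedding_le:
  assumes into: "g ` omega_pow a \<subseteq> omega_pow b"
    and mono: "monotone_on (omega_pow a) lex_less lex_less g"
  shows "a \<le> b"
proof (rule ccontr)
  assume "\<not> a \<le> b"
  hence ba: "b < a" by simp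
  define g' where "g' y = replicate (a - b) 0 @ g y" for y
  define p where "p = (1::nat) # replicate (a - 1) 0"
  have into': "g' ` omega_pow a \<subseteq> omega_pow a"
    using into ba by (auto simp: g'_def omega_pow_def)
  have "monotone_on (omega_pow a) lex_less lex_less g'"
    using mono by (auto simp: g'_def lex_less_replicate_prefix monotone_on_def)
  moreover have p: "p \<in> omega_pow a" using ba by (simp add: p_def omega_pow_def)
  moreover have "lex_less (g' p) p"
    using ba by (cases "a - b") (simp_all add: g'_def p_def)
  ultimately show False using monotone_on_omega_pow_not_lex_less into' by blast
qed

lemma omega_pow_embeds_above:
  assumes "1 \<le> a" and "p \<in> omega_pow a"
  obtains sh where "sh ` omega_pow a \<subseteq> {q \<in> omega_pow a. lex_less p q}"
    and "monotone_on (omega_pow a) lex_less lex_less sh"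
proof -
  define sh where "sh y = (hd p + 1 + hd y) # tl y" for y :: "nat list"
  have cons: "\<exists>c cs. xs = c # cs" if "xs \<in> omega_pow a" for xs
    using that assms(1) by (cases xs) (auto simp: omega_pow_def)
  have "sh ` omega_pow a \<subseteq> {q \<in> omega_pow a. lex_less p q}"
    using cons[OF assms(2)] cons by (fastforce simp: sh_def omega_pow_def)
  moreover have "monotone_on (omega_pow a) lex_less lex_less sh"
  proof (rule monotone_onI)
    fix x y assume "x \<in> omega_pow a" "y \<in> omega_pow a" "lex_less x y"
    then show "lex_less (sh x) (sh y)"
      using cons[of x] cons[of y] by (auto simp: sh_def)
  qed
  ultimately show thesis by (rule that)
qed

lemma iso_omega_powE:
  assumes "iso_omega_pow F n"
  obtains f h where "f ` F \<subseteq> omega_pow n" and "h ` omega_pow n \<subseteq> F"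
    and "\<And>y. y \<in> omega_pow n \<Longrightarrow> f (h y) = y"
    and "\<And>x y. x \<in> F \<Longrightarrow> y \<in> F \<Longrightarrow> x < y \<longleftrightarrow> lex_less (f x) (f y)"
proof -
  obtain f where bij: "bij_betw f F (omega_pow n)"
    and ord: "\<forall>x\<in>F. \<forall>y\<in>F. x < y \<longleftrightarrow> lex_less (f x) (f y)"
    using assms unfolding iso_omega_pow_def by blast
  show thesis
  proof (rule that[of f "inv_into F f"])
    show "f ` F \<subseteq> omega_pow n" "inv_into F f ` omega_pow n \<subseteq> F"
      using bij by (auto simp: bij_betw_def inv_into_into)
    show "f (inv_into F f y) = y" if "y \<in> omega_pow n" for y
      using bij that by (simp add: bij_betw_def f_inv_into_f)
  qed (use ord in blast)
qed

lemma iso_omega_pow_subset_le: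
  assumes sub: "F' \<subseteq> F" and iso: "iso_omega_pow F a" and iso': "iso_omega_pow F' b"
  shows "b \<le> a"
proof -
  obtain f h where f: "f ` F \<subseteq> omega_pow a" and "h ` omega_pow a \<subseteq> F"
    and "\<And>y. y \<in> omega_pow a \<Longrightarrow> f (h y) = y"
    and ord: "\<And>x y. x \<in> F \<Longrightarrow> y \<in> F \<Longrightarrow> x < y \<longleftrightarrow> lex_less (f x) (f y)"
    by (rule iso_omega_powE[OF iso]) blast
  obtain f' h' where "f' ` F' \<subseteq> omega_pow b" and h': "h' ` omega_pow b \<subseteq> F'"
    and fh': "\<And>y. y \<in> omega_pow b \<Longrightarrow> f' (h' y) = y"
    and ord': "\<And>x y. x \<in> F' \<Longrightarrow> y \<in> F' \<Longrightarrow> x < y \<longleftrightarrow> lex_less (f' x) (f' y)"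
    by (rule iso_omega_powE[OF iso']) blast
  show ?thesis
  proof (rule omega_pow_embedding_le)
    show "(f \<circ> h') ` omega_pow b \<subseteq> omega_pow a" using f h' sub by auto
    show "monotone_on (omega_pow b) lex_less lex_less (f \<circ> h')"
    proof (rule monotone_onI)
      fix x y assume "x \<in> omega_pow b" "y \<in> omega_pow b" "lex_less x y"
      then show "lex_less ((f \<circ> h') x) ((f \<circ> h') y)"
        using h' sub fh' ord ord' by (metis comp_apply image_subset_iff subset_iff)
    qed
  qed
qed

lemma iso_omega_pow_final_segment_ge:
  assumes seg: "final_segment F' F" and iso: "iso_omega_pow F a" and iso': "iso_omega_pow F' b"
  shows "a \<le> b"
proof (cases "a = 0")
  case False
  obtain f h where f: "f ` F \<subseteq> omega_pow a" and h: "h ` omega_pow a \<subseteq> F"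
    and fh: "\<And>y. y \<in> omega_pow a \<Longrightarrow> f (h y) = y"
    and ord: "\<And>x y. x \<in> F \<Longrightarrow> y \<in> F \<Longrightarrow> x < y \<longleftrightarrow> lex_less (f x) (f y)"
    by (rule iso_omega_powE[OF iso]) blast
  obtain f' h' where f': "f' ` F' \<subseteq> omega_pow b" and h': "h' ` omega_pow b \<subseteq> F'"
    and "\<And>y. y \<in> omega_pow b \<Longrightarrow> f' (h' y) = y"
    and ord': "\<And>x y. x \<in> F' \<Longrightarrow> y \<in> F' \<Longrightarrow> x < y \<longleftrightarrow> lex_less (f' x) (f' y)"
    by (rule iso_omega_powE[OF iso']) blast
  have sub: "F' \<subseteq> F" using seg by (simp add: final_segment_def)
  define z where "z = h' (replicate b 0)"
  have z: "z \<in> F'" using h' by (auto simp: z_def omega_pow_def)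
  obtain sh where sh: "sh ` omega_pow a \<subseteq> {q \<in> omega_pow a. lex_less (f z) q}"
    and sh_mono: "monotone_on (omega_pow a) lex_less lex_less sh"
  proof (rule omega_pow_embeds_above)
    show "1 \<le> a" using False by simp
    show "f z \<in> omega_pow a" using f z sub by blast
  qed
  have hsh: "h (sh y) \<in> F'" if "y \<in> omega_pow a" for y
  proof -
    have "sh y \<in> omega_pow a" "lex_less (f z) (sh y)" using sh that by auto
    hence "z < h (sh y)" using ord[of z "h (sh y)"] fh h z sub by auto
    thus ?thesis using seg z h \<open>sh y \<in> omega_pow a\<close> unfolding final_segment_def by fastforce
  qed
  show ?thesis
  proof (rule omega_pow_embedding_le)
    show "(f' \<circ> h \<circ> sh) ` omega_pow a \<subseteq> omega_pow b" using f' hsh by auto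
    show "monotone_on (omega_pow a) lex_less lex_less (f' \<circ> h \<circ> sh)"
    proof (rule monotone_onI)
      fix x y assume xy: "x \<in> omega_pow a" "y \<in> omega_pow a" "lex_less x y"
      have "lex_less (sh x) (sh y)" using monotone_onD[OF sh_mono xy] .
      moreover have "sh x \<in> omega_pow a" "sh y \<in> omega_pow a" using sh xy by auto
      ultimately have "h (sh x) < h (sh y)" using ord fh h by (metis image_subset_iff)
      then show "lex_less ((f' \<circ> h \<circ> sh) x) ((f' \<circ> h \<circ> sh) y)"
        using ord' hsh xy by simp
    qed
  qed
qed simp

lemma final_segments_nested:
  assumes "final_segment F I" and "final_segment F' I"
  shows "F \<subseteq> F' \<or> F' \<subseteq> F"
proof (rule ccontr)
  assume "\<not> ?thesis"
  then obtain x y where "x \<in> F" "x \<notin> F'" "y \<in> F'" "y \<notin> F" by blast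
  with assms show False unfolding final_segment_def by (metis in_mono nle_le)
qed

lemma final_segment_of_final_segment:
  assumes "final_segment F I" and "final_segment F' I" and "F' \<subseteq> F"
  shows "final_segment F' F"
  using assms unfolding final_segment_def by blast

lemma cut_type_unique: "cut_type I n \<Longrightarrow> cut_type I m \<Longrightarrow> n = m"
proof -
  have nested_eq: "a = b"
    if "final_segment F I" "final_segment F' I" "F' \<subseteq> F" "iso_omega_pow F a" "iso_omega_pow F' b"
    for F F' :: "'a set" and a b
  proof (rule antisym)
    show "b \<le> a" using iso_omega_pow_subset_le that(3-5) .
    show "a \<le> b" using iso_omega_pow_final_segment_ge final_segment_of_final_segment that by blast
  qed
  assume "cut_type I n" "cut_type I m"
  then obtain F F' where F: "final_segment F I" "iso_omega_pow F n"
    and F': "final_segment F' I" "iso_omega_pow F' m"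
    unfolding cut_type_def by blast
  from final_segments_nested[OF F(1) F'(1)] show "n = m"
    using nested_eq[OF F(1) F'(1) _ F(2) F'(2)] nested_eq[OF F'(1) F(1) _ F'(2) F(2)] by auto
qed

lemma is_cut_linear: "is_cut A \<Longrightarrow> is_cut B \<Longrightarrow> A \<subseteq> B \<or> B \<subseteq> A"
  unfolding is_cut_def by (metis nle_le subsetI)

lemma ladder_proper_cut: "ladder C \<Longrightarrow> proper_cut (C k)"
  by (simp add: ladder_def)

lemma ladder_is_cut: "ladder C \<Longrightarrow> is_cut (C k)"
  using ladder_proper_cut proper_cut_def by blast

lemma ladder_nonempty: "ladder C \<Longrightarrow> C k \<noteq> {}"
  using ladder_proper_cut proper_cut_def by blast

lemma ladder_psubset_Suc: "ladder C \<Longrightarrow> C (Suc k) \<subset> C k"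
  by (simp add: ladder_def)

lemma ladder_coinitial: "ladder C \<Longrightarrow> \<exists>k. x \<notin> C k"
  by (simp add: ladder_def)

lemma ladder_has_spectrum: "ladder C \<Longrightarrow> \<exists>ns. has_spectrum C ns"
  unfolding has_spectrum_def by (auto simp: ladder_def)

lemma has_spectrum_ladder_conditions:
  assumes "has_spectrum C ns"
  shows "ns k \<le> ns (Suc k)"
    and "is_cut X \<Longrightarrow> C (Suc k) \<subset> X \<Longrightarrow> X \<subset> C k \<Longrightarrow> cut_type X t \<Longrightarrow> t < ns k"
proof -
  obtain ns' where types: "\<forall>k. cut_type (C k) (ns' k)" and mono: "\<forall>k. ns' k \<le> ns' (Suc k)"
    and gap: "\<forall>k X. is_cut X \<longrightarrow> C (Suc k) \<subset> X \<longrightarrow> X \<subset> C k \<longrightarrow> (\<exists>m. cut_type X m \<and> m < ns' k)"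
    using assms unfolding has_spectrum_def ladder_def by (elim conjE exE) auto
  have same: "ns' k = ns k" for k
    using types assms cut_type_unique unfolding has_spectrum_def by blast
  show "ns k \<le> ns (Suc k)" using mono same by metis
  show "t < ns k" if X: "is_cut X" "C (Suc k) \<subset> X" "X \<subset> C k" and t: "cut_type X t"
  proof -
    obtain m where "cut_type X m" "m < ns' k" using gap X by blast
    then show ?thesis using cut_type_unique[OF t] same by metis
  qed
qed

lemma ladder_antimono:
  assumes "ladder C" and "a \<le> b"
  shows "C b \<subseteq> C a"
  using assms(2)
proof (induction b rule: dec_induct)
  case (step n)
  then show ?case using ladder_psubset_Suc[OF assms(1), of n] by blast
qed simp

lemma ladder_subset_iff:
  assumes "ladder C"
  shows "C a \<subseteq> C b \<longleftrightarrow> b \<le> a"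
proof
  assume sub: "C a \<subseteq> C b"
  show "b \<le> a"
  proof (rule ccontr)
    assume "\<not> b \<le> a"
    hence "C b \<subseteq> C (Suc a)" using ladder_antimono[OF assms] by simp
    with sub ladder_psubset_Suc[OF assms, of a] show False by blast
  qed
qed (rule ladder_antimono[OF assms])

lemma ladder_below:
  assumes "ladder C" and "is_cut X" and "X \<noteq> {}"
  shows "\<exists>k. C k \<subset> X"
proof -
  obtain x where "x \<in> X" using assms(3) by blast
  moreover obtain k where "x \<notin> C k" using ladder_coinitial[OF assms(1)] by blast
  ultimately show ?thesis using is_cut_linear[OF ladder_is_cut[OF assms(1)] assms(2)] by blast
qed

lemma ladder_locate:
  assumes C: "ladder C" and X: "is_cut X" "X \<noteq> {}" "X \<subseteq> C 0"
  shows "\<exists>j. C (Suc j) \<subset> X \<and> X \<subseteq> C j"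
proof -
  obtain k where k: "C k \<subset> X" and least: "\<forall>m<k. \<not> C m \<subset> X"
    using exists_least_iff[THEN iffD1, OF ladder_below[OF C X(1,2)]] by blast
  obtain j where j: "k = Suc j" using k X(3) by (cases k) auto
  have "X \<subseteq> C j" using least j is_cut_linear[OF ladder_is_cut[OF C] X(1), of j] by blast
  then show ?thesis using k j by blast
qed

lemma gap_contains_pred_rung:
  assumes C: "has_spectrum C ns" and D: "has_spectrum D ms"
    and gap: "C (Suc j) \<subset> D (Suc l)" "D (Suc l) \<subset> C j"
  shows "C (Suc j) \<subset> D l \<and> D l \<subset> C j"
proof -
  have lad: "ladder C" "ladder D" using C D by (simp_all add: has_spectrum_def)
  have types: "cut_type (C k) (ns k)" "cut_type (D k) (ms k)" for k
    using C D by (simp_all add: has_spectrum_def)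
  have small: "ms (Suc l) < ns j"
    using has_spectrum_ladder_conditions(2)[OF C ladder_is_cut[OF lad(2)] gap types(2)] .
  have mono: "ms l \<le> ms (Suc l)" using has_spectrum_ladder_conditions(1)[OF D] .
  have "\<not> C j \<subseteq> D l"
  proof
    assume sub: "C j \<subseteq> D l"
    show False
    proof (cases "C j = D l")
      case True
      then show False using cut_type_unique types small mono by (metis leD)
    next
      case False
      with sub have "D (Suc l) \<subset> C j" "C j \<subset> D l" using gap by blast+
      hence "ns j < ms l"
        using has_spectrum_ladder_conditions(2)[OF D ladder_is_cut[OF lad(1)] _ _ types(1)] by blast
      then show False using small mono by simp
    qed
  qed
  then show ?thesis
    using gap ladder_psubset_Suc[OF lad(2), of l]
      is_cut_linear[OF ladder_is_cut[OF lad(1)] ladder_is_cut[OF lad(2)], of j l]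
    by blast
qed

lemma gap_contains_first_rung:
  assumes C: "has_spectrum C ns" and D: "has_spectrum D ms"
  shows "C (Suc j) \<subset> D l \<Longrightarrow> D l \<subset> C j \<Longrightarrow> C (Suc j) \<subset> D 0 \<and> D 0 \<subset> C j"
proof (induction l)
  case (Suc l)
  then show ?case using gap_contains_pred_rung[OF C D, of j l] by simp
qed simp

lemma eventually_in_range_ladder:
  assumes C: "has_spectrum C ns" and D: "has_spectrum D ms"
  shows "\<exists>L. \<forall>l\<ge>L. D l \<in> range C"
proof -
  have lad: "ladder C" "ladder D" using C D by (simp_all add: has_spectrum_def)
  obtain J where J: "C J \<subset> D 0"
    using ladder_below[OF lad(1) ladder_is_cut[OF lad(2)] ladder_nonempty[OF lad(2)]] by blast
  obtain x where x: "x \<in> C J" using ladder_nonempty[OF lad(1)] by blast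
  then obtain L where "x \<notin> D L" using ladder_coinitial[OF lad(2)] by blast
  with x have DL: "D L \<subseteq> C J"
    using is_cut_linear[OF ladder_is_cut[OF lad(2)] ladder_is_cut[OF lad(1)], of L J] by blast
  have "D l \<in> range C" if "l \<ge> L" for l
  proof -
    have Dl: "D l \<subseteq> C J" using ladder_antimono[OF lad(2) that] DL by blast
    hence "D l \<subseteq> C 0" using ladder_antimono[OF lad(1), of 0 J] by simp
    then obtain j where j: "C (Suc j) \<subset> D l" "D l \<subseteq> C j"
      using ladder_locate[OF lad(1) ladder_is_cut[OF lad(2)] ladder_nonempty[OF lad(2)]] by blast
    have "D l = C j"
    proof (rule ccontr)
      assume "D l \<noteq> C j"
      with j have "D 0 \<subset> C j" using gap_contains_first_rung[OF C D] by blast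
      moreover have "J \<le> j" using j(1) Dl ladder_subset_iff[OF lad(1), of J "Suc j"] by auto
      ultimately show False using J ladder_antimono[OF lad(1), of J j] by blast
    qed
    then show ?thesis by simp
  qed
  then show ?thesis by blast
qed

lemma ladder_Suc_subset:
  assumes C: "ladder C" and D: "ladder D"
    and eq: "C k = D l" and next_in: "C (Suc k) \<in> range D"
  shows "C (Suc k) \<subseteq> D (Suc l)"
proof -
  obtain l' where l': "C (Suc k) = D l'" using next_in by blast
  have "D l' \<subset> D l" using ladder_psubset_Suc[OF C, of k] eq l' by simp
  hence "Suc l \<le> l'" using ladder_subset_iff[OF D, of l l'] ladder_subset_iff[OF D, of l' l] by auto
  then show ?thesis using l' ladder_antimono[OF D] by simp
qed

lemma ladders_eventually_equal:
  assumes C: "has_spectrum C ns" and D: "has_spectrum D ms"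
  shows "\<exists>k0 l0. \<forall>n. C (k0 + n) = D (l0 + n)"
proof -
  have lad: "ladder C" "ladder D" using C D by (simp_all add: has_spectrum_def)
  obtain L where L: "\<And>l. l \<ge> L \<Longrightarrow> D l \<in> range C"
    using eventually_in_range_ladder[OF C D] by blast
  obtain K where K: "\<And>k. k \<ge> K \<Longrightarrow> C k \<in> range D"
    using eventually_in_range_ladder[OF D C] by blast
  obtain b where b: "C K = D b" using K by blast
  define l0 where "l0 = max L b"
  obtain k0 where k0: "D l0 = C k0" using L[of l0] by (auto simp: l0_def)
  have "C k0 \<subseteq> C K" using k0 b ladder_antimono[OF lad(2), of b l0] by (simp add: l0_def)
  hence "K \<le> k0" using ladder_subset_iff[OF lad(1)] by blast
  have "C (k0 + n) = D (l0 + n)" for n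
  proof (induction n)
    case (Suc n)
    have "C (Suc (k0 + n)) \<subseteq> D (Suc (l0 + n))"
      using ladder_Suc_subset[OF lad Suc] K \<open>K \<le> k0\<close> by simp
    moreover have "D (Suc (l0 + n)) \<subseteq> C (Suc (k0 + n))"
      using ladder_Suc_subset[OF lad(2,1) Suc[symmetric]] L by (simp add: l0_def)
    ultimately show ?case by simp
  qed (use k0 in simp)
  then show ?thesis by blast
qed

theorem mainTheorem4:
  fixes C D :: "nat \<Rightarrow> 'a::linorder set"
  assumes all_typed: "\<forall>I::'a set. proper_cut I \<longrightarrow> (\<exists>n. cut_type I n)"
    and "ladder C" and "ladder D"
  shows "(\<exists>k0 l0. \<forall>n. C (k0 + n) = D (l0 + n)) \<and>
         (\<forall>ns ms. has_spectrum C ns \<longrightarrow> has_spectrum D ms \<longrightarrow>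
            (\<exists>k0 l0. \<forall>n. ns (k0 + n) = ms (l0 + n)))"
proof -
  obtain ns ms where "has_spectrum C ns" "has_spectrum D ms"
    using ladder_has_spectrum assms(2,3) by blast
  then obtain k0 l0 where tails: "\<forall>n. C (k0 + n) = D (l0 + n)"
    using ladders_eventually_equal by blast
  have "ns' (k0 + n) = ms' (l0 + n)" if "has_spectrum C ns'" "has_spectrum D ms'" for ns' ms' n
  proof (rule cut_type_unique)
    show "cut_type (C (k0 + n)) (ns' (k0 + n))" using that(1) by (simp add: has_spectrum_def)
    show "cut_type (C (k0 + n)) (ms' (l0 + n))" using that(2) tails by (simp add: has_spectrum_def)
  qed
  then show ?thesis using tails by blast
qed

end
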